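(* The equations \[ \alpha u=k\frac{f_0g_0f_3}{f_0g_0+g_0f_3+f_3g_3}+\ell\frac{f_2g_2f_5}{f_2g_2+g_2f_5+f_5g_5}+m\frac{f_4g_4f_1}{f_4g_4+g_4f_1+f_1g_1}, \] \[ \beta v=k\frac{g_0f_3g_3}{f_0g_0+g_0f_3+f_3g_3}+\ell\frac{g_2f_5g_5}{f_2g_2+g_2f_5+f_5g_5}+m\frac{g_4f_1g_1}{f_4g_4+g_4f_1+f_1g_1} \] are well defined equations for the point $\mathfrak{z}\in V(\mathcal{T}\mathcal{L})$, i.e. they are invariant under the shift $(k,\ell,m)\mapsto(k+n,\ell+n,m+n)$, provided the equations $\frac{u(\mathfrak{z}_2)-u(\mathfrak{z}_1)}{u(\mathfrak{z}_3)-u(\mathfrak{z}_2)}=\frac{v(\mathfrak{z}_3)-v(\mathfrak{z}_2)}{v(\mathfrak{z}_1)-v(\mathfrak{z}_3)}$ hold on all positively oriented elementary triangles.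
   Context: On the regular triangular lattice with vertices $\mathfrak{z}=k+\ell\omega+m\omega^2$ ($\omega=e^{2\pi i/3}$; the triples $(k,\ell,m)$ and $(k+n,\ell+n,m+n)$ represent the same vertex), $u,v$ are complex functions on vertices. For a vertex $\mathfrak{z}$ with chosen representative $(k,\ell,m)$, $u=u(\mathfrak{z})$, $v=v(\mathfrak{z})$, and with edges $\mathfrak{e}_0=(\mathfrak{z},\mathfrak{z}+1)$, $\mathfrak{e}_2=(\mathfrak{z},\mathfrak{z}+\omega)$, $\mathfrak{e}_4=(\mathfrak{z},\mathfrak{z}+\omega^2)$, $\mathfrak{e}_1=(\mathfrak{z}-\omega^2,\mathfrak{z})$, $\mathfrak{e}_3=(\mathfrak{z}-1,\mathfrak{z})$, $\mathfrak{e}_5=(\mathfrak{z}-\omega,\mathfrak{z})$, set $f_j=u(\text{end of }\mathfrak{e}_j)-u(\text{start of }\mathfrak{e}_j)$, $g_j$ likewise with $v$. A positively oriented elementary triangle has consecutive vertices $\mathfrak{z}_1,\mathfrak{z}_2,\mathfrak{z}_3$ with $\mathfrak{z}_2-\mathfrak{z}_1,\mathfrak{z}_3-\mathfrak{z}_2,\mathfrak{z}_1-\mathfrak{z}_3\in\{1,\omega,\omega^2\}$. $\alpha,\beta\in\mathbb C$ are constants. *)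

theory Defs
  imports Complex_Main
begin

definition omega :: complex where
  "omega = cis (2 * pi / 3)"

definition vtx :: "int \<Rightarrow> int \<Rightarrow> int \<Rightarrow> complex" where
  "vtx k l m = of_int k + of_int l * omega + of_int m * omega ^ 2"

definition lattice_vertices :: "complex set" where
  "lattice_vertices = {vtx k l m | k l m. True}"

definition unit_dirs :: "complex set" where
  "unit_dirs = {1, omega, omega ^ 2}"

definition pos_triangle :: "complex \<Rightarrow> complex \<Rightarrow> complex \<Rightarrow> bool" where
  "pos_triangle z1 z2 z3 \<longleftrightarrow> z1 \<in> lattice_vertices \<and>
     z2 - z1 \<in> unit_dirs \<and> z3 - z2 \<in> unit_dirs \<and> z1 - z3 \<in> unit_dirs"

text \<open>Edge differences f_j (for w = u) resp. g_j (for w = v) at the vertex z: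
  e0 = (z, z+1), e1 = (z - omega^2, z), e2 = (z, z+omega), e3 = (z-1, z),
  e4 = (z, z+omega^2), e5 = (z-omega, z); value at end minus value at start.\<close>
definition edge_diff :: "(complex \<Rightarrow> complex) \<Rightarrow> complex \<Rightarrow> nat \<Rightarrow> complex" where
  "edge_diff w z j =
     [w (z + 1) - w z, w z - w (z - omega ^ 2), w (z + omega) - w z,
      w z - w (z - 1), w (z + omega ^ 2) - w z, w z - w (z - omega)] ! j"

definition rhs_u :: "(complex \<Rightarrow> complex) \<Rightarrow> (complex \<Rightarrow> complex) \<Rightarrow> int \<Rightarrow> int \<Rightarrow> int \<Rightarrow> complex" where
  "rhs_u u v k l m =
     (let z = vtx k l m; f = edge_diff u z; g = edge_diff v z in
        of_int k * (f 0 * g 0 * f 3) / (f 0 * g 0 + g 0 * f 3 + f 3 * g 3)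
      + of_int l * (f 2 * g 2 * f 5) / (f 2 * g 2 + g 2 * f 5 + f 5 * g 5)
      + of_int m * (f 4 * g 4 * f 1) / (f 4 * g 4 + g 4 * f 1 + f 1 * g 1))"

definition rhs_v :: "(complex \<Rightarrow> complex) \<Rightarrow> (complex \<Rightarrow> complex) \<Rightarrow> int \<Rightarrow> int \<Rightarrow> int \<Rightarrow> complex" where
  "rhs_v u v k l m =
     (let z = vtx k l m; f = edge_diff u z; g = edge_diff v z in
        of_int k * (g 0 * f 3 * g 3) / (f 0 * g 0 + g 0 * f 3 + f 3 * g 3)
      + of_int l * (g 2 * f 5 * g 5) / (f 2 * g 2 + g 2 * f 5 + f 5 * g 5)
      + of_int m * (g 4 * f 1 * g 1) / (f 4 * g 4 + g 4 * f 1 + f 1 * g 1))"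

end

theory Submission
  imports Defs
begin

text \<open>
  At a vertex z write f_j, g_j for the edge differences of u and v and x_j = f_j g_j. The
  triangle equation on the positive triangle spanned by the edges e_i and e_j (i even,
  j = i \<plusminus> 1) reads f_i g_i + g_i f_j + f_j g_j = 0, which is the shape of the three
  denominators, taken at the opposite edges (0,3), (2,5), (4,1). Shifting (k,l,m) by n adds
  n times the sum S of the three fractions to the right-hand side, so it suffices that S = 0.
  Along a path i, i+1, i+2, i+3 of adjacent edges the relations turn the denominator at (i,i+3),
  multiplied by g_(i+2) f_(i+1), into -(x_i - x_(i+2)) (x_(i+1) - x_(i+3)). Then S becomes a
  rational function of the x_j which vanishes because, going once around the hexagon, the
  relations force (x_0 + x_1)(x_2 + x_3)(x_4 + x_5) = (x_2 + x_1)(x_4 + x_3)(x_0 + x_5).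
  The sum in the equation for v is the sum for u taken for the pair (g, f) turned by 180 degrees.
\<close>

lemma omega_squared: "omega ^ 2 = - 1 - omega"
proof -
  have omega: "omega = Complex (-1/2) (sqrt 3 / 2)"
    unfolding omega_def by (simp add: cis.ctr cos_120 sin_120)
  show ?thesis unfolding omega by (simp add: complex_eq_iff power2_eq_square algebra_simps)
qed

lemma vtx_shift: "vtx (k + n) (l + n) (m + n) = vtx k l m"
  unfolding vtx_def omega_squared by (simp add: algebra_simps)

lemma pos_triangles_at_vertex:
  assumes "z \<in> lattice_vertices"
  shows "pos_triangle z (z + 1) (z - omega ^ 2)" "pos_triangle z (z + omega) (z - omega ^ 2)"
    "pos_triangle z (z + omega) (z - 1)" "pos_triangle z (z + omega ^ 2) (z - 1)"
    "pos_triangle z (z + omega ^ 2) (z - omega)" "pos_triangle z (z + 1) (z - omega)"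
  using assms unfolding pos_triangle_def unit_dirs_def omega_squared
  by (simp_all add: algebra_simps)

lemma triangle_relation_product_form:
  fixes a0 a1 a2 b0 b1 b2 :: "'a::field"
  assumes "a2 \<noteq> a1" "b0 \<noteq> b2" "(a1 - a0) / (a2 - a1) = (b2 - b1) / (b0 - b2)"
  shows "(a1 - a0) * (b1 - b0) + (b1 - b0) * (a0 - a2) + (a0 - a2) * (b0 - b2) = 0"
proof -
  have "(a1 - a0) * (b0 - b2) = (b2 - b1) * (a2 - a1)"
    using assms by (simp add: divide_eq_eq eq_divide_eq)
  then show ?thesis by (simp add: algebra_simps)
qed

definition triangle_form ::
    "(nat \<Rightarrow> 'a::comm_ring) \<Rightarrow> (nat \<Rightarrow> 'a) \<Rightarrow> nat \<Rightarrow> nat \<Rightarrow> 'a" where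
  "triangle_form f g i j = f i * g i + g i * f j + f j * g j"

lemma triangle_form_eq_0_iff:
  "triangle_form f g i j = 0 \<longleftrightarrow> g i * f j = - (f i * g i + f j * g j)"
  unfolding triangle_form_def by (simp add: algebra_simps add_eq_0_iff)

lemma triangle_form_across:
  assumes "triangle_form f g i j = 0" "triangle_form f g i' j = 0" "triangle_form f g i' j' = 0"
  shows "triangle_form f g i j' * (g i' * f j) =
    - ((f i * g i - f i' * g i') * (f j * g j - f j' * g j'))"
proof -
  have "triangle_form f g i j' * (g i' * f j)
      = (f i * g i + f j' * g j') * (g i' * f j) + (g i * f j) * (g i' * f j')"
    unfolding triangle_form_def by (simp add: algebra_simps)
  also have "\<dots> = (f i * g i + f j * g j) * (f i' * g i' + f j' * g j')
      - (f i * g i + f j' * g j') * (f i' * g i' + f j * g j)"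
    unfolding assms[unfolded triangle_form_eq_0_iff] by (simp add: algebra_simps)
  finally show ?thesis by (simp add: algebra_simps)
qed

lemma triangle_form_across_quotient:
  fixes f g :: "nat \<Rightarrow> 'a::field"
  assumes "triangle_form f g i j = 0" "triangle_form f g i' j = 0" "triangle_form f g i' j' = 0"
    and "triangle_form f g i j' \<noteq> 0" "g i' \<noteq> 0" "f j \<noteq> 0"
  shows "(f i * g i - f i' * g i') * (f j * g j - f j' * g j') \<noteq> 0"
    and "f i * g i * f j' / triangle_form f g i j' =
      - (f i * g i) * (f j * g i' * f j')
        / ((f i * g i - f i' * g i') * (f j * g j - f j' * g j'))"
proof -
  note across = triangle_form_across[OF assms(1-3)]
  show "(f i * g i - f i' * g i') * (f j * g j - f j' * g j') \<noteq> 0"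
    using across assms(4-6) by (metis mult_eq_0_iff neg_equal_0_iff_equal)
  have "f i * g i * f j' / triangle_form f g i j'
      = f i * g i * f j' * (g i' * f j) / (triangle_form f g i j' * (g i' * f j))"
    using assms(5,6) by simp
  then show "f i * g i * f j' / triangle_form f g i j' =
      - (f i * g i) * (f j * g i' * f j')
        / ((f i * g i - f i' * g i') * (f j * g j - f j' * g j'))"
    unfolding across by (simp add: ac_simps)
qed

lemma hexagon_fraction_sum_eq_0:
  fixes x0 x1 x2 x3 x4 x5 :: "'a::field"
  assumes closure: "(x0 + x1) * (x2 + x3) * (x4 + x5) = (x2 + x1) * (x4 + x3) * (x0 + x5)"
    and "x0 \<noteq> x2" "x1 \<noteq> x3" "x2 \<noteq> x4" "x3 \<noteq> x5" "x2 + x1 \<noteq> 0"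
  shows "x0 / ((x0 - x2) * (x1 - x3)) + x4 / ((x2 - x4) * (x1 - x3))
    + x2 * (x4 + x5) / ((x2 + x1) * (x2 - x4) * (x3 - x5)) = 0"
proof -
  have "x0 - x2 \<noteq> 0" "x1 - x3 \<noteq> 0" "x2 - x4 \<noteq> 0" "x3 - x5 \<noteq> 0"
    using assms(2-5) by simp_all
  then have "x0 / ((x0 - x2) * (x1 - x3)) + x4 / ((x2 - x4) * (x1 - x3))
      + x2 * (x4 + x5) / ((x2 + x1) * (x2 - x4) * (x3 - x5))
    = (x0 * (x2 - x4) * (x3 - x5) * (x2 + x1) + x4 * (x0 - x2) * (x3 - x5) * (x2 + x1)
      + x2 * (x4 + x5) * (x0 - x2) * (x1 - x3))
      / ((x0 - x2) * (x1 - x3) * (x2 - x4) * (x3 - x5) * (x2 + x1))"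
    using assms(6) by (simp add: divide_simps) (simp add: algebra_simps)
  also have "\<dots> =
      - x2 * ((x0 + x1) * (x2 + x3) * (x4 + x5) - (x2 + x1) * (x4 + x3) * (x0 + x5))
      / ((x0 - x2) * (x1 - x3) * (x2 - x4) * (x3 - x5) * (x2 + x1))"
    by (simp add: algebra_simps)
  also have "\<dots> = 0" using closure by simp
  finally show ?thesis .
qed

definition half_turn :: "(nat \<Rightarrow> 'a) \<Rightarrow> nat \<Rightarrow> 'a" where
  "half_turn f j = f ((j + 3) mod 6)"

lemma half_turn_simps [simp]:
  "half_turn f 0 = f 3" "half_turn f (Suc 0) = f 4" "half_turn f 2 = f 5"
  "half_turn f 3 = f 0" "half_turn f 4 = f 1" "half_turn f 5 = f 2"
  by (simp_all add: half_turn_def)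

definition opposite_sum :: "(nat \<Rightarrow> 'a::field) \<Rightarrow> (nat \<Rightarrow> 'a) \<Rightarrow> 'a" where
  "opposite_sum f g =
     f 0 * g 0 * f 3 / triangle_form f g 0 3 + f 2 * g 2 * f 5 / triangle_form f g 2 5
   + f 4 * g 4 * f 1 / triangle_form f g 4 1"

locale hexagon_relations =
  fixes f g :: "nat \<Rightarrow> 'a::field"
  assumes adjacent: "triangle_form f g 0 1 = 0" "triangle_form f g 2 1 = 0"
      "triangle_form f g 2 3 = 0" "triangle_form f g 4 3 = 0"
      "triangle_form f g 4 5 = 0" "triangle_form f g 0 5 = 0"
    and odd_f_nonzero: "f 1 \<noteq> 0" "f 3 \<noteq> 0" "f 5 \<noteq> 0"
    and even_g_nonzero: "g 0 \<noteq> 0" "g 2 \<noteq> 0" "g 4 \<noteq> 0"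
begin

lemma hexagon_closure:
  "(f 0 * g 0 + f 1 * g 1) * (f 2 * g 2 + f 3 * g 3) * (f 4 * g 4 + f 5 * g 5)
 = (f 2 * g 2 + f 1 * g 1) * (f 4 * g 4 + f 3 * g 3) * (f 0 * g 0 + f 5 * g 5)"
proof -
  have "(g 0 * f 1) * (g 2 * f 3) * (g 4 * f 5) = (g 2 * f 1) * (g 4 * f 3) * (g 0 * f 5)"
    by (simp add: ac_simps)
  then show ?thesis
    unfolding adjacent[unfolded triangle_form_eq_0_iff]
    by (simp only: mult_minus_left mult_minus_right minus_minus neg_equal_iff_equal)
qed

lemma opposite_sum_eq_0:
  assumes "triangle_form f g 0 3 \<noteq> 0" "triangle_form f g 2 5 \<noteq> 0"
    "triangle_form f g 4 1 \<noteq> 0"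
  shows "opposite_sum f g = 0"
proof -
  define x where "x j = f j * g j" for j
  define p where "p = f 1 * g 2 * f 3"
  note T03 = triangle_form_across_quotient[OF adjacent(1,2,3) assms(1) even_g_nonzero(2)
      odd_f_nonzero(1)]
  note T25 = triangle_form_across_quotient[OF adjacent(3,4,5) assms(2) even_g_nonzero(3)
      odd_f_nonzero(2)]
  note T41 = triangle_form_across_quotient[OF adjacent(4,3,2) assms(3) even_g_nonzero(2)
      odd_f_nonzero(2)]
  have x21: "x 2 + x 1 = - (g 2 * f 1)" and x45: "x 4 + x 5 = - (g 4 * f 5)"
    using adjacent(2,5) unfolding triangle_form_eq_0_iff x_def by simp_all
  have x21_nonzero: "x 2 + x 1 \<noteq> 0"
    using x21 odd_f_nonzero(1) even_g_nonzero(2) by simp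
  have "f 3 * g 4 * f 5 = p * (x 4 + x 5) / (x 2 + x 1)"
    using x21_nonzero unfolding x21 x45 p_def by (simp add: field_simps)
  then have "opposite_sum f g = - p * (x 0 / ((x 0 - x 2) * (x 1 - x 3))
      + x 4 / ((x 2 - x 4) * (x 1 - x 3))
      + x 2 * (x 4 + x 5) / ((x 2 + x 1) * (x 2 - x 4) * (x 3 - x 5)))"
    unfolding opposite_sum_def T03(2) T25(2) T41(2) p_def x_def
    by (simp add: algebra_simps)
  also have "\<dots> = 0"
    using hexagon_fraction_sum_eq_0[OF hexagon_closure[folded x_def] _ _ _ _ x21_nonzero]
      T03(1) T25(1)
    unfolding x_def by simp
  finally show ?thesis .
qed

lemma half_turn: "hexagon_relations (half_turn g) (half_turn f)"
  using adjacent odd_f_nonzero even_g_nonzero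
  by unfold_locales (simp_all add: triangle_form_def ac_simps)

lemma opposite_sum_half_turn_eq_0:
  assumes "triangle_form f g 0 3 \<noteq> 0" "triangle_form f g 2 5 \<noteq> 0"
    "triangle_form f g 4 1 \<noteq> 0"
  shows "opposite_sum (half_turn g) (half_turn f) = 0"
proof -
  interpret opposite: hexagon_relations "half_turn g" "half_turn f"
    by (rule half_turn)
  show ?thesis
    using assms
    by (intro opposite.opposite_sum_eq_0) (simp_all add: triangle_form_def ac_simps)
qed

end

lemma hexagon_relations_edge_diff:
  fixes u v :: "complex \<Rightarrow> complex"
  assumes nondeg: "\<forall>z1 z2 z3. pos_triangle z1 z2 z3 \<longrightarrow>
      u z2 \<noteq> u z1 \<and> u z3 \<noteq> u z2 \<and> u z1 \<noteq> u z3 \<and>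
      v z2 \<noteq> v z1 \<and> v z3 \<noteq> v z2 \<and> v z1 \<noteq> v z3"
    and tri: "\<forall>z1 z2 z3. pos_triangle z1 z2 z3 \<longrightarrow>
      (u z2 - u z1) / (u z3 - u z2) = (v z3 - v z2) / (v z1 - v z3)"
    and "z \<in> lattice_vertices"
  shows "hexagon_relations (edge_diff u z) (edge_diff v z)"
proof -
  have relation: "triangle_form (edge_diff u z) (edge_diff v z) i j = 0"
    if "pos_triangle z P Q"
      "\<And>w. edge_diff w z i = w P - w z" "\<And>w. edge_diff w z j = w z - w Q"
    for i j P Q
    using triangle_relation_product_form[of "u Q" "u P" "v z" "v Q" "u z" "v P"]
      nondeg tri that unfolding triangle_form_def by simp
  note triangles = pos_triangles_at_vertex[OF assms(3)]
  show ?thesis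
  proof unfold_locales
    show "triangle_form (edge_diff u z) (edge_diff v z) 0 1 = 0"
      by (rule relation[OF triangles(1)]) (simp_all add: edge_diff_def)
    show "triangle_form (edge_diff u z) (edge_diff v z) 2 1 = 0"
      by (rule relation[OF triangles(2)]) (simp_all add: edge_diff_def)
    show "triangle_form (edge_diff u z) (edge_diff v z) 2 3 = 0"
      by (rule relation[OF triangles(3)]) (simp_all add: edge_diff_def)
    show "triangle_form (edge_diff u z) (edge_diff v z) 4 3 = 0"
      by (rule relation[OF triangles(4)]) (simp_all add: edge_diff_def)
    show "triangle_form (edge_diff u z) (edge_diff v z) 4 5 = 0"
      by (rule relation[OF triangles(5)]) (simp_all add: edge_diff_def)
    show "triangle_form (edge_diff u z) (edge_diff v z) 0 5 = 0"
      by (rule relation[OF triangles(6)]) (simp_all add: edge_diff_def)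
  qed (use nondeg triangles in \<open>auto simp: edge_diff_def\<close>)
qed

lemma rhs_u_shift:
  "rhs_u u v (k + n) (l + n) (m + n) =
     rhs_u u v k l m + of_int n * opposite_sum (edge_diff u (vtx k l m)) (edge_diff v (vtx k l m))"
  unfolding rhs_u_def vtx_shift Let_def opposite_sum_def triangle_form_def
  by (simp add: algebra_simps add_divide_distrib)

lemma rhs_v_shift:
  "rhs_v u v (k + n) (l + n) (m + n) =
     rhs_v u v k l m + of_int n * opposite_sum (half_turn (edge_diff v (vtx k l m)))
       (half_turn (edge_diff u (vtx k l m)))"
  unfolding rhs_v_def vtx_shift Let_def opposite_sum_def triangle_form_def
  by (simp add: algebra_simps add_divide_distrib)

theorem proposition15:
  fixes u v :: "complex \<Rightarrow> complex" and \<alpha> \<beta> :: complex and k l m n :: int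
  assumes nondeg: "\<forall>z1 z2 z3. pos_triangle z1 z2 z3 \<longrightarrow>
      u z2 \<noteq> u z1 \<and> u z3 \<noteq> u z2 \<and> u z1 \<noteq> u z3 \<and>
      v z2 \<noteq> v z1 \<and> v z3 \<noteq> v z2 \<and> v z1 \<noteq> v z3"
    and tri: "\<forall>z1 z2 z3. pos_triangle z1 z2 z3 \<longrightarrow>
      (u z2 - u z1) / (u z3 - u z2) = (v z3 - v z2) / (v z1 - v z3)"
    and den: "let z = vtx k l m; f = edge_diff u z; g = edge_diff v z in
      f 0 * g 0 + g 0 * f 3 + f 3 * g 3 \<noteq> 0 \<and>
      f 2 * g 2 + g 2 * f 5 + f 5 * g 5 \<noteq> 0 \<and>
      f 4 * g 4 + g 4 * f 1 + f 1 * g 1 \<noteq> 0"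
  shows "vtx (k + n) (l + n) (m + n) = vtx k l m \<and>
    (\<alpha> * u (vtx k l m) = rhs_u u v k l m \<longleftrightarrow>
       \<alpha> * u (vtx (k + n) (l + n) (m + n)) = rhs_u u v (k + n) (l + n) (m + n)) \<and>
    (\<beta> * v (vtx k l m) = rhs_v u v k l m \<longleftrightarrow>
       \<beta> * v (vtx (k + n) (l + n) (m + n)) = rhs_v u v (k + n) (l + n) (m + n)) \<and>
    rhs_u u v (k + n) (l + n) (m + n) = rhs_u u v k l m \<and>
    rhs_v u v (k + n) (l + n) (m + n) = rhs_v u v k l m"
proof -
  define z where "z = vtx k l m"
  interpret hexagon_relations "edge_diff u z" "edge_diff v z"
    using hexagon_relations_edge_diff[OF nondeg tri] unfolding z_def lattice_vertices_def by blast
  have denominators: "triangle_form (edge_diff u z) (edge_diff v z) 0 3 \<noteq> 0"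
      "triangle_form (edge_diff u z) (edge_diff v z) 2 5 \<noteq> 0"
      "triangle_form (edge_diff u z) (edge_diff v z) 4 1 \<noteq> 0"
    using den unfolding Let_def z_def[symmetric] triangle_form_def by simp_all
  show ?thesis
    using rhs_u_shift rhs_v_shift vtx_shift opposite_sum_eq_0[OF denominators]
      opposite_sum_half_turn_eq_0[OF denominators]
    unfolding z_def by simp
qed

end
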